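(* The CDF of $\gamma_{R,j}$ can be derived in closed form as $$F_{\gamma_{R,j}}(\psi_j) = 1 - \frac{\lambda_z e^{-\lambda_x(\mathcal{M}_\Delta + \mathcal{L})}}{\lambda_z + \lambda_x \mathcal{K}_\Delta}\left(1 - e^{-\lambda_y \Lambda_S}\right) + \frac{\lambda_y \lambda_z\, \mathrm{Ei}[-\mu_S \xi_S]}{\lambda_x \mathcal{K}_\Upsilon}\, e^{-\Lambda_S(\lambda_y + \lambda_x \mathcal{M}_\Upsilon) - \lambda_x \mathcal{L} + \mu_S \xi_S},$$ valid for $\psi_j < \alpha_j/\mathcal{A}$; otherwise $F_{\gamma_{R,j}}(\psi_j) \approx 1$.
   Context: Underlay cognitive-radio NOMA downlink: a secondary source $S$ sends the superposed signal $\sum_{b=1}^B \sqrt{\alpha_b} x_b$ (power allocation $\alpha_1 > \dots > \alpha_B$, $\sum_b \alpha_b = 1$) to a decode-and-forward relay $R$, while a primary transmitter $T$ (power $P_T$) interferes and a primary destination $D$ imposes an interference temperature constraint $I_{\text{ITC}}$. The source power is $P_S = \min(\bar{P}_S, I_{\text{ITC}} d_{SD}^{\tau}/|\bar{h}_{SD}|^2)$. Channels use imperfect-CSI model $\bar h_i = h_i + e_i$, $e_i \sim \mathcal{CN}(0,\zeta_i)$; $\phi$ denote aggregate hardware-impairment levels; $0<\epsilon_n<1$ is the residual imperfect-SIC factor (written $\backepsilon_n$ in the paper); $d_i$ are distances, $\tau$ the path-loss exponent, $\sigma_R^2$ the noise variance at $R$. The SIDNR at $R$ for decoding $x_j$ ($1\le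 j<B$) is $\gamma_{R,j} = \dfrac{\alpha_j P_S |h_{SR}|^2}{\mathcal{A} P_S |h_{SR}|^2 + \mathcal{C} P_S + \mathcal{D}_R \tilde{P}_T |\bar h_{TR}|^2 + d_{SR}^{\tau}\sigma_R^2}$, with $\mathcal{A} = \sum_{n=j+1}^B \alpha_n + \sum_{n=1}^{j-1} \epsilon_n \alpha_n + \phi_{SR}^2$, $\mathcal{C} = \zeta_{SR}(1+\phi_{SR}^2)$, $\mathcal{D}_R = d_{SR}^{\tau} d_{TR}^{-\tau}(1+\phi_{TR}^2)$, $\tilde P_T = P_T/d_{TR}^{\tau}$. Let $X=|h_{SR}|^2$, $Y=|\bar h_{SD}|^2$, $Z=|\bar h_{TR}|^2$ be independent exponential RVs with rates $\lambda_x,\lambda_y,\lambda_z$. Define $\mathcal{K}_\Delta = \frac{\mathcal{D}_R \tilde P_T \psi_j}{\bar P_S(\alpha_j - \mathcal{A}\psi_j)}$, $\mathcal{M}_\Delta = \frac{\psi_j d_{SR}^{\tau}\sigma_R^2}{\bar P_S(\alpha_j - \mathcal{A}\psi_j)}$, and $\mathcal{K}_\Upsilon$, $\mathcal{M}_\Upsilon$ the same expressions with $\bar P_S$ replaced by $I_{\text{ITC}} d_{SD}^{\tau}$; $\mathcal{L} = \frac{\mathcal{C}\psi_j}{\alpha_j - \mathcal{A}\psi_j}$; $\Lambda_S = I_{\text{ITC}} d_{SD}^{\tau}/\bar P_S$; $\mu_S = \lambda_z + \lambda_x \Lambda_S \mathcal{K}_\Upsilon$; $\xi_S = \mathcal{M}_\Upsilon/\mathcal{K}_\Upsilon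 + \lambda_y/(\lambda_x \mathcal{K}_\Upsilon)$. The CDF decomposes as $F_{\gamma_{R,j}}(\psi_j) = \Pr[X < Z\mathcal{K}_\Delta + \mathcal{M}_\Delta + \mathcal{L},\, Y<\Lambda_S] + \Pr[X < ZY\mathcal{K}_\Upsilon + Y\mathcal{M}_\Upsilon + \mathcal{L},\, Y>\Lambda_S]$. $\mathrm{Ei}[\cdot]$ is the exponential integral function. *)

theory Defs
  imports "HOL-Probability.Probability"
begin

text \<open>Exponential integral, negative-argument branch:
  Ei(x) = - integral from -x to infinity of exp(-t)/t dt  (used only for x < 0).\<close>
definition Ei :: "real \<Rightarrow> real" where
  "Ei x = - (LBINT t:{-x<..}. exp (- t) / t)"

text \<open>Source transmit power P_S = min(Pbar_S, I_ITC d_SD^tau / |hbar_SD|^2), with y = |hbar_SD|^2.\<close>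
definition source_power :: "real \<Rightarrow> real \<Rightarrow> real \<Rightarrow> real \<Rightarrow> real \<Rightarrow> real" where
  "source_power PSbar Iitc dSD tau y = min PSbar (Iitc * dSD powr tau / y)"

text \<open>SIDNR at R for decoding x_j, with x = |h_SR|^2, y = |hbar_SD|^2, z = |hbar_TR|^2;
  A, C, D_R, PTt = tilde P_T, and N = d_SR^tau sigma_R^2 are the coefficients of the paper.\<close>
definition sidnr_R :: "real \<Rightarrow> real \<Rightarrow> real \<Rightarrow> real \<Rightarrow> real \<Rightarrow> real \<Rightarrow> real
                      \<Rightarrow> real \<Rightarrow> real \<Rightarrow> real \<Rightarrow> real \<Rightarrow> real \<Rightarrow> real \<Rightarrow> real" where
  "sidnr_R alpha_j A C DR PTt N PSbar Iitc dSD tau x y z =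
     (let PS = source_power PSbar Iitc dSD tau y in
      alpha_j * PS * x / (A * PS * x + C * PS + DR * PTt * z + N))"

end

theory Submission
  imports Defs
begin

text \<open>Given \<open>Y = y\<close> and \<open>Z = z\<close>, clearing the denominator of the SIDNR shows that
  \<open>\<psi> < \<gamma>\<^sub>R\<^sub>,\<^sub>j\<close> exactly when \<open>X\<close> exceeds \<open>L + KD z + MD\<close> if \<open>y \<le> LamS\<close>
  (where \<open>P\<^sub>S = PSbar\<close>) and \<open>L + y (KU z + MU)\<close> otherwise. The exponential tail of \<open>X\<close>
  followed by the Laplace transform of \<open>Z\<close> integrates out \<open>x\<close> and \<open>z\<close>; on \<open>y > LamS\<close>
  what remains is a multiple of \<open>exp (- c y) / (y + a)\<close>, which the substitution
  \<open>t = c (y + a)\<close> integrates to an exponential integral at \<open>- c (LamS + a) = - muS xiS\<close>.\<close>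

lemma nn_integral_exponential_density:
  assumes "0 < l"
  shows "(\<integral>\<^sup>+x. ennreal (exponential_density l x) \<partial>lborel) = 1"
  using nn_integral_erlang_ith_moment[OF assms, of 0 0] by simp

lemma nn_integral_exponential_density_atMost:
  assumes "0 < l" "0 \<le> a"
  shows "(\<integral>\<^sup>+x. ennreal (exponential_density l x) * indicator {..a} x \<partial>lborel)
    = ennreal (1 - exp (- a * l))"
  using nn_integral_erlang_density[OF assms(1), of 0 a] assms(2) by (simp add: erlang_CDF_0 mult.commute)

lemma nn_integral_exponential_density_greaterThan:
  assumes l: "0 < l" and a: "0 \<le> a"
  shows "(\<integral>\<^sup>+x. ennreal (exponential_density l x) * indicator {a<..} x \<partial>lborel) = ennreal (exp (- a * l))"
proof -
  let ?f = "\<lambda>x. ennreal (exponential_density l x)"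
  have "(\<integral>\<^sup>+x. ?f x * indicator {..a} x \<partial>lborel) + (\<integral>\<^sup>+x. ?f x * indicator {a<..} x \<partial>lborel)
      = (\<integral>\<^sup>+x. ?f x \<partial>lborel)"
    by (subst nn_integral_add[symmetric]) (auto intro!: nn_integral_cong simp: indicator_def)
  then have "ennreal (1 - exp (- a * l)) + (\<integral>\<^sup>+x. ?f x * indicator {a<..} x \<partial>lborel)
      = ennreal (1 - exp (- a * l)) + ennreal (exp (- a * l))"
    using l a by (simp add: nn_integral_exponential_density nn_integral_exponential_density_atMost
        flip: ennreal_plus)
  then show ?thesis by (simp add: ennreal_add_left_cancel)
qed

lemma nn_integral_exponential_density_times_exp:
  assumes l: "0 < l" and c: "0 \<le> c"
  shows "(\<integral>\<^sup>+z. ennreal (exponential_density l z) * ennreal (exp (- c * z)) \<partial>lborel)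
    = ennreal (l / (l + c))"
proof -
  have "ennreal (exponential_density l z) * ennreal (exp (- c * z))
      = ennreal (l / (l + c)) * ennreal (exponential_density (l + c) z)" for z
  proof -
    have "exp (- z * l) * exp (- c * z) = exp (- z * (l + c))"
      by (simp add: algebra_simps flip: exp_add)
    then have "exponential_density l z * exp (- c * z) = l / (l + c) * exponential_density (l + c) z"
      using l c by (simp add: exponential_density_def)
    then show ?thesis
      using l c by (simp add: exponential_density_nonneg flip: ennreal_mult)
  qed
  then have "(\<integral>\<^sup>+z. ennreal (exponential_density l z) * ennreal (exp (- c * z)) \<partial>lborel)
      = ennreal (l / (l + c)) * (\<integral>\<^sup>+z. ennreal (exponential_density (l + c) z) \<partial>lborel)"
    by (simp add: nn_integral_cmult)
  then show ?thesis
    using l c by (simp add: nn_integral_exponential_density)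
qed

lemma nn_integral_exponential_tail_affine:
  assumes lx: "0 < lx" and lz: "0 < lz" and a: "0 \<le> a" and c: "0 \<le> c"
  shows "(\<integral>\<^sup>+z. ennreal (exponential_density lz z)
            * (\<integral>\<^sup>+x. ennreal (exponential_density lx x) * indicator {a + c * z<..} x \<partial>lborel) \<partial>lborel)
    = ennreal (exp (- a * lx) * (lz / (lz + lx * c)))"
proof -
  have "ennreal (exponential_density lz z)
          * (\<integral>\<^sup>+x. ennreal (exponential_density lx x) * indicator {a + c * z<..} x \<partial>lborel)
      = ennreal (exp (- a * lx)) * (ennreal (exponential_density lz z) * ennreal (exp (- (lx * c) * z)))"
    for z
  proof (cases "z < 0")
    case False
    then have "exp (- (a + c * z) * lx) = exp (- a * lx) * exp (- (lx * c) * z)"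
      by (simp add: algebra_simps flip: exp_add)
    then show ?thesis
      using False lx a c
      by (simp add: nn_integral_exponential_density_greaterThan ennreal_mult' mult_ac)
  qed (simp add: exponential_density_def)
  then have "(\<integral>\<^sup>+z. ennreal (exponential_density lz z)
            * (\<integral>\<^sup>+x. ennreal (exponential_density lx x) * indicator {a + c * z<..} x \<partial>lborel) \<partial>lborel)
      = ennreal (exp (- a * lx)) * ennreal (lz / (lz + lx * c))"
    using nn_integral_exponential_density_times_exp[OF lz, of "lx * c"] lx c
    by (simp add: nn_integral_cmult)
  then show ?thesis
    by (simp only: ennreal_mult'[OF exp_ge_zero])
qed

lemma Ei_neg_nonpos:
  assumes "0 < b"
  shows "Ei (- b) \<le> 0"
proof -
  have "0 \<le> (LBINT t:{b<..}. exp (- t) / t)"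
    unfolding set_lebesgue_integral_def using assms
    by (intro integral_nonneg_AE AE_I2) (auto simp: indicator_def)
  then show ?thesis by (simp add: Ei_def)
qed

lemma nn_integral_exp_divide_greaterThan:
  assumes b: "0 < b"
  shows "(\<integral>\<^sup>+t. ennreal (exp (- t) / t) * indicator {b<..} t \<partial>lborel) = ennreal (- Ei (- b))"
proof -
  let ?I = "\<integral>\<^sup>+t. ennreal (exp (- t) / t) * indicator {b<..} t \<partial>lborel"
  have "?I \<le> (\<integral>\<^sup>+t. ennreal (1 / b) * ennreal (exponential_density 1 t) \<partial>lborel)"
  proof (intro nn_integral_mono)
    fix t :: real
    have "exp (- t) / t \<le> 1 / b * exponential_density 1 t" if "b < t"
      using that b by (simp add: exponential_density_def divide_left_mono)
    then show "ennreal (exp (- t) / t) * indicator {b<..} t \<le> ennreal (1 / b) * ennreal (exponential_density 1 t)"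
      using b by (simp add: indicator_def ennreal_leI flip: ennreal_mult)
  qed
  also have "\<dots> = ennreal (1 / b)"
    by (simp add: nn_integral_cmult nn_integral_exponential_density)
  finally have finite: "?I < \<infinity>"
    using le_less_trans by fastforce
  have "- Ei (- b) = integral\<^sup>L lborel (\<lambda>t. indicator {b<..} t *\<^sub>R (exp (- t) / t))"
    by (simp add: Ei_def set_lebesgue_integral_def)
  also have "\<dots> = enn2real ?I"
    using b by (subst integral_eq_nn_integral)
      (auto intro!: arg_cong[where f = enn2real] nn_integral_cong simp: indicator_def)
  finally show ?thesis
    using finite by simp
qed

lemma nn_integral_exp_divide_shift:
  assumes c: "0 < c" and a: "0 < a" and s: "0 \<le> s"
  shows "(\<integral>\<^sup>+y. ennreal (exp (- c * y) / (y + a)) * indicator {s<..} y \<partial>lborel)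
       = ennreal (exp (c * a) * (- Ei (- (c * (s + a)))))"
proof -
  define b where "b = c * (s + a)"
  have b: "0 < b" using c a s by (simp add: b_def)
  let ?g = "\<lambda>t. ennreal (exp (- t) / t) * indicator {b<..} t"
  let ?I = "\<integral>\<^sup>+y. ennreal (exp (- c * y) / (y + a)) * indicator {s<..} y \<partial>lborel"
  have g_affine: "?g (c * a + c * y)
      = ennreal (exp (- (c * a)) / c) * (ennreal (exp (- c * y) / (y + a)) * indicator {s<..} y)" for y
  proof (cases "s < y")
    case True
    have "exp (- (c * a + c * y)) / (c * a + c * y) = exp (- (c * a)) / c * (exp (- c * y) / (y + a))"
      using c by (simp add: algebra_simps flip: exp_add)
    moreover have "b < c * a + c * y"
      using True c by (simp add: b_def algebra_simps)
    ultimately show ?thesis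
      using True c a s by (simp add: ennreal_mult[symmetric])
  next
    case False
    then have "\<not> b < c * a + c * y" using c by (simp add: b_def algebra_simps)
    then show ?thesis using False by simp
  qed
  have "ennreal (- Ei (- b)) = (\<integral>\<^sup>+t. ?g t \<partial>lborel)"
    using nn_integral_exp_divide_greaterThan[OF b] by simp
  also have "\<dots> = ennreal c * (\<integral>\<^sup>+y. ?g (c * a + c * y) \<partial>lborel)"
    using c by (subst nn_integral_real_affine[where c = c and t = "c * a"]) auto
  also have "\<dots> = ennreal c * (ennreal (exp (- (c * a)) / c) * ?I)"
    unfolding g_affine by (subst nn_integral_cmult) auto
  also have "\<dots> = ennreal (exp (- (c * a))) * ?I"
    using c by (simp add: mult.assoc[symmetric] flip: ennreal_mult)
  finally have "ennreal (exp (c * a)) * ennreal (- Ei (- b)) = ?I"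
    by (simp add: mult.assoc[symmetric] exp_minus flip: ennreal_mult)
  then show ?thesis
    unfolding b_def by (simp only: ennreal_mult'[OF exp_ge_zero])
qed

lemma nn_integral_exponential_tail_threshold:
  assumes lx: "0 < lx" and lz: "0 < lz" and LamS: "0 \<le> LamS"
    and coeffs: "0 \<le> L" "0 \<le> KD" "0 \<le> MD" "0 \<le> KU" "0 \<le> MU"
  shows "(\<integral>\<^sup>+z. ennreal (exponential_density lz z) * (\<integral>\<^sup>+x. ennreal (exponential_density lx x)
            * indicator {L + (if y \<le> LamS then KD * z + MD else y * (KU * z + MU))<..} x \<partial>lborel) \<partial>lborel)
    = ennreal (if y \<le> LamS then exp (- (L + MD) * lx) * (lz / (lz + lx * KD))
               else exp (- (L + y * MU) * lx) * (lz / (lz + lx * (y * KU))))"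
proof (cases "y \<le> LamS")
  case True
  then have threshold: "L + (if y \<le> LamS then KD * z + MD else y * (KU * z + MU)) = (L + MD) + KD * z"
    for z by simp
  show ?thesis
    unfolding threshold using True nn_integral_exponential_tail_affine[OF lx lz, of "L + MD" KD] coeffs by simp
next
  case False
  then have "0 \<le> y"
    using LamS by simp
  have threshold: "L + (if y \<le> LamS then KD * z + MD else y * (KU * z + MU)) = (L + y * MU) + (y * KU) * z"
    for z using False by (simp add: algebra_simps)
  show ?thesis
    unfolding threshold using False nn_integral_exponential_tail_affine[OF lx lz, of "L + y * MU" "y * KU"] coeffs \<open>0 \<le> y\<close>
    by simp
qed

lemma nn_integral_exponential_tail_threshold_above:
  assumes lx: "0 < lx" and ly: "0 < ly" and lz: "0 < lz" and LamS: "0 \<le> LamS"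
    and KU: "0 < KU" and MU: "0 \<le> MU"
  defines "c \<equiv> ly + lx * MU" and "a \<equiv> lz / (lx * KU)"
  shows "(\<integral>\<^sup>+y. ennreal (exponential_density ly y) * ennreal (exp (- (L + y * MU) * lx)
             * (lz / (lz + lx * (y * KU)))) * indicator {LamS<..} y \<partial>lborel)
    = ennreal (ly * lz / (lx * KU) * exp (- L * lx) * exp (c * a) * - Ei (- (c * (LamS + a))))"
proof -
  define K where "K = ly * lz / (lx * KU) * exp (- L * lx)"
  have c: "0 < c" and a: "0 < a" and K: "0 \<le> K"
    using lx ly lz KU MU by (simp_all add: c_def a_def K_def add_pos_nonneg)
  have "ennreal (exponential_density ly y) * ennreal (exp (- (L + y * MU) * lx)
            * (lz / (lz + lx * (y * KU)))) * indicator {LamS<..} y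
      = ennreal K * (ennreal (exp (- c * y) / (y + a)) * indicator {LamS<..} y)" for y
  proof (cases "LamS < y")
    case True
    then have y: "0 < y"
      using LamS by simp
    have denom: "lz + lx * (y * KU) = lx * KU * (y + a)"
      using lx KU by (simp add: a_def field_simps)
    have "exponential_density ly y * (exp (- (L + y * MU) * lx) * (lz / (lz + lx * (y * KU))))
        = ly * lz / (lx * KU) * (exp (- y * ly) * exp (- (L + y * MU) * lx)) / (y + a)"
      unfolding denom using y lx KU a by (simp add: exponential_density_def field_simps)
    also have "exp (- y * ly) * exp (- (L + y * MU) * lx) = exp (- L * lx) * exp (- c * y)"
      by (simp add: c_def algebra_simps flip: exp_add)
    finally have "exponential_density ly y * (exp (- (L + y * MU) * lx) * (lz / (lz + lx * (y * KU))))
        = K * (exp (- c * y) / (y + a))"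
      by (simp add: K_def)
    then show ?thesis
      using True y a K lx lz ly KU MU
      by (simp add: exponential_density_nonneg flip: ennreal_mult)
  qed simp
  then have "(\<integral>\<^sup>+y. ennreal (exponential_density ly y) * ennreal (exp (- (L + y * MU) * lx)
             * (lz / (lz + lx * (y * KU)))) * indicator {LamS<..} y \<partial>lborel)
      = (\<integral>\<^sup>+y. ennreal K * (ennreal (exp (- c * y) / (y + a)) * indicator {LamS<..} y) \<partial>lborel)"
    by (simp only:)
  also have "\<dots> = ennreal K * (\<integral>\<^sup>+y. ennreal (exp (- c * y) / (y + a)) * indicator {LamS<..} y \<partial>lborel)"
    by (rule nn_integral_cmult) simp
  also have "\<dots> = ennreal K * ennreal (exp (c * a) * (- Ei (- (c * (LamS + a)))))"
    by (simp only: nn_integral_exp_divide_shift[OF c a LamS])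
  also have "\<dots> = ennreal (ly * lz / (lx * KU) * exp (- L * lx) * exp (c * a) * - Ei (- (c * (LamS + a))))"
    by (subst ennreal_mult'[OF K, symmetric]) (simp add: K_def mult_ac)
  finally show ?thesis .
qed

lemma nn_integral_exponential_tail_threshold_iterated:
  assumes lx: "0 < lx" and ly: "0 < ly" and lz: "0 < lz" and LamS: "0 \<le> LamS"
    and coeffs: "0 \<le> L" "0 \<le> KD" "0 \<le> MD" "0 < KU" "0 \<le> MU"
  defines "c \<equiv> ly + lx * MU" and "a \<equiv> lz / (lx * KU)"
  shows "(\<integral>\<^sup>+y. ennreal (exponential_density ly y) * (\<integral>\<^sup>+z. ennreal (exponential_density lz z)
            * (\<integral>\<^sup>+x. ennreal (exponential_density lx x)
                * indicator {L + (if y \<le> LamS then KD * z + MD else y * (KU * z + MU))<..} x \<partial>lborel)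
            \<partial>lborel) \<partial>lborel)
    = ennreal (exp (- (L + MD) * lx) * (lz / (lz + lx * KD)) * (1 - exp (- LamS * ly))
        + ly * lz / (lx * KU) * exp (- L * lx) * exp (c * a) * - Ei (- (c * (LamS + a))))"
proof -
  define T0 where "T0 = exp (- (L + MD) * lx) * (lz / (lz + lx * KD))"
  define T where "T y = exp (- (L + y * MU) * lx) * (lz / (lz + lx * (y * KU)))" for y
  define E where "E = ly * lz / (lx * KU) * exp (- L * lx) * exp (c * a) * - Ei (- (c * (LamS + a)))"
  have "0 < c * (LamS + a)"
    using lx ly lz LamS coeffs unfolding c_def a_def
    by (intro mult_pos_pos add_pos_nonneg add_nonneg_pos) auto
  then have E: "0 \<le> E"
    using lx ly lz coeffs Ei_neg_nonpos[of "c * (LamS + a)"] unfolding E_def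
    by (intro mult_nonneg_nonneg) auto
  have T0: "0 \<le> T0" and CDF: "0 \<le> 1 - exp (- LamS * ly)"
    using lx ly lz LamS coeffs unfolding T0_def by auto
  have "(\<integral>\<^sup>+y. ennreal (exponential_density ly y) * (\<integral>\<^sup>+z. ennreal (exponential_density lz z)
            * (\<integral>\<^sup>+x. ennreal (exponential_density lx x)
                * indicator {L + (if y \<le> LamS then KD * z + MD else y * (KU * z + MU))<..} x \<partial>lborel)
            \<partial>lborel) \<partial>lborel)
      = (\<integral>\<^sup>+y. ennreal T0 * (ennreal (exponential_density ly y) * indicator {..LamS} y)
            + ennreal (exponential_density ly y) * ennreal (T y) * indicator {LamS<..} y \<partial>lborel)"
    using nn_integral_exponential_tail_threshold[OF lx lz LamS coeffs(1-3) less_imp_le[OF coeffs(4)] coeffs(5)]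
    by (intro nn_integral_cong) (simp add: T0_def T_def indicator_def mult.commute)
  also have "\<dots> = ennreal T0 * (\<integral>\<^sup>+y. ennreal (exponential_density ly y) * indicator {..LamS} y \<partial>lborel)
      + (\<integral>\<^sup>+y. ennreal (exponential_density ly y) * ennreal (T y) * indicator {LamS<..} y \<partial>lborel)"
    by (simp add: nn_integral_add nn_integral_cmult T_def)
  also have "\<dots> = ennreal T0 * ennreal (1 - exp (- LamS * ly)) + ennreal E"
    using nn_integral_exponential_density_atMost[OF ly LamS]
      nn_integral_exponential_tail_threshold_above[OF lx ly lz LamS coeffs(4,5)]
    by (simp add: T_def E_def c_def a_def)
  also have "\<dots> = ennreal (T0 * (1 - exp (- LamS * ly)) + E)"
    using T0 CDF E by (simp add: ennreal_mult')
  finally show ?thesis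
    by (simp add: T0_def E_def)
qed

lemma (in prob_space) indep_vars_triple:
  fixes X Y Z :: "'a \<Rightarrow> real"
  assumes indep: "indep_vars (\<lambda>_. borel) (\<lambda>i::nat. if i = 0 then X else if i = 1 then Y else Z) {0, 1, 2}"
  shows "distr M lborel X \<Otimes>\<^sub>M distr M (lborel \<Otimes>\<^sub>M lborel) (\<lambda>w. (Y w, Z w))
      = distr M (lborel \<Otimes>\<^sub>M (lborel \<Otimes>\<^sub>M lborel)) (\<lambda>w. (X w, Y w, Z w))"
    and "indep_var lborel Y lborel Z"
proof -
  let ?V = "\<lambda>i::nat. if i = 0 then X else if i = 1 then Y else Z"
  let ?R = "\<lambda>I w. restrict (\<lambda>i. ?V i w) I"
  let ?P = "\<lambda>I. PiM I (\<lambda>_. borel) :: (nat \<Rightarrow> real) measure"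
  have indep_0_12: "indep_var (?P {0}) (?R {0}) (?P {1, 2}) (?R {1, 2})"
    by (rule indep_var_restrict[OF indep]) auto
  note rv0 = indep_var_rv1[OF indep_0_12] and rv12 = indep_var_rv2[OF indep_0_12]
  have eq: "distr M (?P {0}) (?R {0}) \<Otimes>\<^sub>M distr M (?P {1, 2}) (?R {1, 2})
      = distr M (?P {0} \<Otimes>\<^sub>M ?P {1, 2}) (\<lambda>w. (?R {0} w, ?R {1, 2} w))"
    using indep_0_12 by (simp add: indep_var_distribution_eq)
  have m0: "(\<lambda>f. f 0) \<in> measurable (?P {0}) (lborel :: real measure)"
    by measurable
  have m12: "(\<lambda>f. (f 1, f 2)) \<in> measurable (?P {1, 2}) (lborel \<Otimes>\<^sub>M (lborel :: real measure))"
    by measurable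
  have m: "(\<lambda>(f, g). (f 0, (g 1, g 2))) \<in> measurable (?P {0} \<Otimes>\<^sub>M ?P {1, 2}) (lborel \<Otimes>\<^sub>M (lborel \<Otimes>\<^sub>M lborel))"
    by measurable
  have sf: "sigma_finite_measure (distr (distr M (?P {1, 2}) (?R {1, 2})) (lborel \<Otimes>\<^sub>M lborel) (\<lambda>f. (f 1, f 2)))"
    using m12 by (intro prob_space_imp_sigma_finite prob_space.prob_space_distr prob_space_distr rv12) simp_all
  have "distr M lborel X \<Otimes>\<^sub>M distr M (lborel \<Otimes>\<^sub>M lborel) (\<lambda>w. (Y w, Z w))
      = distr (distr M (?P {0}) (?R {0})) lborel (\<lambda>f. f 0)
          \<Otimes>\<^sub>M distr (distr M (?P {1, 2}) (?R {1, 2})) (lborel \<Otimes>\<^sub>M lborel) (\<lambda>f. (f 1, f 2))"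
    using rv0 rv12 m0 m12 by (simp add: distr_distr comp_def)
  also have "\<dots> = distr (distr M (?P {0}) (?R {0}) \<Otimes>\<^sub>M distr M (?P {1, 2}) (?R {1, 2}))
      (lborel \<Otimes>\<^sub>M (lborel \<Otimes>\<^sub>M lborel)) (\<lambda>(f, g). (f 0, (g 1, g 2)))"
    using m0 m12 by (subst pair_measure_distr[OF _ _ sf]) (simp_all add: case_prod_beta)
  also have "\<dots> = distr M (lborel \<Otimes>\<^sub>M (lborel \<Otimes>\<^sub>M lborel)) (\<lambda>w. (X w, Y w, Z w))"
    unfolding eq using rv0 rv12 m by (subst distr_distr) (auto simp: comp_def)
  finally show "distr M lborel X \<Otimes>\<^sub>M distr M (lborel \<Otimes>\<^sub>M lborel) (\<lambda>w. (Y w, Z w))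
      = distr M (lborel \<Otimes>\<^sub>M (lborel \<Otimes>\<^sub>M lborel)) (\<lambda>w. (X w, Y w, Z w))" .
  have "indep_var (?P {1}) (?R {1}) (?P {2}) (?R {2})"
    by (rule indep_var_restrict[OF indep]) auto
  then have "indep_var lborel ((\<lambda>f. f 1) \<circ> ?R {1}) lborel ((\<lambda>f. f 2) \<circ> ?R {2})"
    by (rule indep_var_compose) measurable
  then show "indep_var lborel Y lborel Z"
    by (simp add: comp_def)
qed

lemma (in prob_space) AE_exponential_distributed_pos:
  assumes "distributed M lborel X (exponential_density l)"
  shows "AE w in M. 0 < X w"
  using AE_lborel_singleton[of 0]
  by (subst distributed_AE2[OF assms]) (auto elim!: eventually_mono simp: exponential_density_def)

lemma (in prob_space) emeasure_less_indep:
  fixes X :: "'a \<Rightarrow> real" and W :: "'a \<Rightarrow> 'b"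
  assumes N: "sigma_finite_measure N"
    and X: "distributed M lborel X fX" and W: "distributed M N W fW"
    and indep: "distr M lborel X \<Otimes>\<^sub>M distr M N W = distr M (lborel \<Otimes>\<^sub>M N) (\<lambda>w. (X w, W w))"
    and g[measurable]: "g \<in> borel_measurable N"
  shows "emeasure M {w \<in> space M. g (W w) < X w}
    = (\<integral>\<^sup>+q. fW q * (\<integral>\<^sup>+x. fX x * indicator {g q<..} x \<partial>lborel) \<partial>N)"
proof -
  interpret pair_sigma_finite lborel N
    using N by (simp add: pair_sigma_finite_def lborel.sigma_finite_measure_axioms)
  note XW = distributed_joint_indep'[OF lborel.sigma_finite_measure_axioms N X W indep]
  note [measurable] = distributed_borel_measurable[OF X] distributed_borel_measurable[OF W]
  define S where "S = {p \<in> space (lborel \<Otimes>\<^sub>M N). g (snd p) < fst p}"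
  have S[measurable]: "S \<in> sets (lborel \<Otimes>\<^sub>M N)"
    unfolding S_def by measurable
  have "{w \<in> space M. g (W w) < X w} = (\<lambda>w. (X w, W w)) -` S \<inter> space M"
    using distributed_measurable[OF W] by (auto simp: S_def space_pair_measure measurable_space)
  then have "emeasure M {w \<in> space M. g (W w) < X w}
      = (\<integral>\<^sup>+p. (case p of (x, q) \<Rightarrow> fX x * fW q) * indicator S p \<partial>(lborel \<Otimes>\<^sub>M N))"
    by (simp add: distributed_emeasure[OF XW S])
  also have "\<dots> = (\<integral>\<^sup>+q. \<integral>\<^sup>+x. fX x * fW q * indicator S (x, q) \<partial>lborel \<partial>N)"
    by (subst nn_integral_snd[symmetric]) auto
  also have "\<dots> = (\<integral>\<^sup>+q. fW q * (\<integral>\<^sup>+x. fX x * indicator {g q<..} x \<partial>lborel) \<partial>N)"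
  proof (intro nn_integral_cong)
    fix q assume "q \<in> space N"
    then have "fX x * fW q * indicator S (x, q) = fW q * (fX x * indicator {g q<..} x)" for x
      by (simp add: S_def space_pair_measure indicator_def mult_ac)
    then show "(\<integral>\<^sup>+x. fX x * fW q * indicator S (x, q) \<partial>lborel)
        = fW q * (\<integral>\<^sup>+x. fX x * indicator {g q<..} x \<partial>lborel)"
      by (simp add: nn_integral_cmult)
  qed
  finally show ?thesis .
qed

lemma (in prob_space) prob_exponential_exceeds_threshold:
  fixes X Y Z :: "'a \<Rightarrow> real"
  assumes distX: "distributed M lborel X (exponential_density lx)"
    and distY: "distributed M lborel Y (exponential_density ly)"
    and distZ: "distributed M lborel Z (exponential_density lz)"
    and indep_X: "distr M lborel X \<Otimes>\<^sub>M distr M (lborel \<Otimes>\<^sub>M lborel) (\<lambda>w. (Y w, Z w))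
      = distr M (lborel \<Otimes>\<^sub>M (lborel \<Otimes>\<^sub>M lborel)) (\<lambda>w. (X w, Y w, Z w))"
    and indep_YZ: "indep_var lborel Y lborel Z"
    and lx: "0 < lx" and ly: "0 < ly" and lz: "0 < lz" and LamS: "0 \<le> LamS"
    and coeffs: "0 \<le> L" "0 \<le> KD" "0 \<le> MD" "0 < KU" "0 \<le> MU"
  defines "muS \<equiv> lz + lx * LamS * KU" and "xiS \<equiv> MU / KU + ly / (lx * KU)"
  shows "prob {w \<in> space M. L + (if Y w \<le> LamS then KD * Z w + MD else Y w * (KU * Z w + MU)) < X w}
    = lz * exp (- lx * (MD + L)) / (lz + lx * KD) * (1 - exp (- ly * LamS))
      - ly * lz * Ei (- muS * xiS) / (lx * KU) * exp (- LamS * (ly + lx * MU) - lx * L + muS * xiS)"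
proof -
  define c where "c = ly + lx * MU"
  define a where "a = lz / (lx * KU)"
  define V where "V = exp (- (L + MD) * lx) * (lz / (lz + lx * KD)) * (1 - exp (- LamS * ly))
    + ly * lz / (lx * KU) * exp (- L * lx) * exp (c * a) * - Ei (- (c * (LamS + a)))"
  let ?g = "\<lambda>(y, z). L + (if y \<le> LamS then KD * z + MD else y * (KU * z + MU))"
  have YZ: "distributed M (lborel \<Otimes>\<^sub>M lborel) (\<lambda>w. (Y w, Z w))
      (\<lambda>(y, z). ennreal (exponential_density ly y) * ennreal (exponential_density lz z))"
    using distributed_joint_indep[OF _ _ distY distZ indep_YZ] by (simp add: lborel.sigma_finite_measure_axioms)
  have "emeasure M {w \<in> space M. ?g (Y w, Z w) < X w}
      = (\<integral>\<^sup>+q. (case q of (y, z) \<Rightarrow> ennreal (exponential_density ly y) * ennreal (exponential_density lz z))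
          * (\<integral>\<^sup>+x. ennreal (exponential_density lx x) * indicator {?g q<..} x \<partial>lborel) \<partial>(lborel \<Otimes>\<^sub>M lborel))"
    by (rule emeasure_less_indep[OF _ distX YZ indep_X])
      (simp_all add: sigma_finite_pair_measure lborel.sigma_finite_measure_axioms)
  also have "\<dots> = (\<integral>\<^sup>+y. ennreal (exponential_density ly y) * (\<integral>\<^sup>+z. ennreal (exponential_density lz z)
            * (\<integral>\<^sup>+x. ennreal (exponential_density lx x) * indicator {?g (y, z)<..} x \<partial>lborel)
            \<partial>lborel) \<partial>lborel)"
  proof -
    have [measurable]: "(\<lambda>q. \<integral>\<^sup>+x. ennreal (exponential_density lx x) * indicator {?g q<..} x \<partial>lborel)
        \<in> borel_measurable (lborel \<Otimes>\<^sub>M lborel)"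
      by (rule lborel.borel_measurable_nn_integral) (simp add: split_beta' indicator_def)
    have "(\<lambda>z. ennreal (exponential_density lz z)
        * (\<integral>\<^sup>+x. ennreal (exponential_density lx x) * indicator {?g (y, z)<..} x \<partial>lborel))
        \<in> borel_measurable lborel" for y
      by measurable
    then show ?thesis
      by (subst lborel.nn_integral_fst[symmetric]) (simp_all add: nn_integral_cmult mult.assoc)
  qed
  also have "\<dots> = ennreal V"
    using nn_integral_exponential_tail_threshold_iterated[OF lx ly lz LamS coeffs] by (simp add: V_def c_def a_def)
  finally have emeasure_eq: "emeasure M {w \<in> space M. ?g (Y w, Z w) < X w} = ennreal V" .
  have "0 < c * (LamS + a)"
    using lx ly lz LamS coeffs unfolding c_def a_def
    by (intro mult_pos_pos add_pos_nonneg add_nonneg_pos) auto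
  then have "0 \<le> V"
    using lx ly lz LamS coeffs Ei_neg_nonpos[of "c * (LamS + a)"] unfolding V_def
    by (intro add_nonneg_nonneg mult_nonneg_nonneg) auto
  with emeasure_eq have "prob {w \<in> space M. ?g (Y w, Z w) < X w} = V"
    by (simp add: emeasure_eq_measure)
  moreover have "muS * xiS = c * (LamS + a)"
    unfolding muS_def xiS_def c_def a_def using lx coeffs by (simp add: field_simps)
  ultimately show ?thesis
    by (simp add: V_def c_def a_def exp_add[symmetric] field_simps)
qed

definition sidnr_threshold :: "real \<Rightarrow> real \<Rightarrow> real \<Rightarrow> real \<Rightarrow> real \<Rightarrow> real \<Rightarrow> real
    \<Rightarrow> real \<Rightarrow> real \<Rightarrow> real \<Rightarrow> real \<Rightarrow> real \<Rightarrow> real \<Rightarrow> real" where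
  "sidnr_threshold al A C DR PTt N PSbar Iitc dSD tau psi y z =
    C * psi / (al - A * psi) + (if y \<le> Iitc * dSD powr tau / PSbar
       then DR * PTt * psi / (PSbar * (al - A * psi)) * z + psi * N / (PSbar * (al - A * psi))
       else y * (DR * PTt * psi / (Iitc * dSD powr tau * (al - A * psi)) * z
                 + psi * N / (Iitc * dSD powr tau * (al - A * psi))))"

lemma less_sidnr_R_iff:
  fixes al A C DR PTt N PSbar Iitc dSD tau psi x y z :: real
  assumes A: "0 < A" and C: "0 \<le> C" and DR: "0 \<le> DR" and PTt: "0 \<le> PTt" and N: "0 < N"
    and PSbar: "0 < PSbar" and ITC: "0 < Iitc * dSD powr tau" and psi: "0 < psi" and al: "A * psi < al"
    and x: "0 \<le> x" and y: "0 < y" and z: "0 \<le> z"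
  shows "psi < sidnr_R al A C DR PTt N PSbar Iitc dSD tau x y z
    \<longleftrightarrow> sidnr_threshold al A C DR PTt N PSbar Iitc dSD tau psi y z < x"
proof -
  define Q where "Q = Iitc * dSD powr tau"
  define PS where "PS = source_power PSbar Iitc dSD tau y"
  define d where "d = al - A * psi"
  have d: "0 < d"
    using al by (simp add: d_def)
  have PS_cases: "PS = (if y \<le> Q / PSbar then PSbar else Q / y)"
    using y PSbar by (auto simp: PS_def source_power_def Q_def min_def field_simps)
  then have PS: "0 < PS"
    using ITC y PSbar by (simp add: Q_def)
  have "0 < A * PS * x + C * PS + DR * PTt * z + N"
    using A C DR PTt N PS x z by (intro add_nonneg_pos) auto
  then have "psi < sidnr_R al A C DR PTt N PSbar Iitc dSD tau x y z
      \<longleftrightarrow> psi * (A * PS * x + C * PS + DR * PTt * z + N) < al * PS * x"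
    by (simp add: sidnr_R_def PS_def Let_def pos_less_divide_eq)
  also have "\<dots> \<longleftrightarrow> psi * (C * PS + DR * PTt * z + N) / (PS * d) < x"
    using PS d by (simp add: pos_divide_less_eq d_def algebra_simps)
  also have "psi * (C * PS + DR * PTt * z + N) / (PS * d)
      = C * psi / d + psi * (DR * PTt * z + N) / (PS * d)"
    using PS d by (simp add: field_simps)
  also have "psi * (DR * PTt * z + N) / (PS * d)
      = (if y \<le> Q / PSbar then DR * PTt * psi / (PSbar * d) * z + psi * N / (PSbar * d)
         else y * (DR * PTt * psi / (Q * d) * z + psi * N / (Q * d)))"
  proof (cases "y \<le> Q / PSbar")
    case False
    then have PS_eq: "PS = Q / y"
      using PS_cases by simp
    have "0 < Q"
      using ITC by (simp add: Q_def)
    then show ?thesis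
      unfolding PS_eq using False y d by (simp add: field_simps)
  qed (use PS_cases PSbar d in \<open>simp add: field_simps\<close>)
  finally show ?thesis
    by (simp add: sidnr_threshold_def d_def Q_def)
qed

lemma (in prob_space) prob_sidnr_R_le:
  fixes X Y Z :: "'a \<Rightarrow> real"
  assumes distX: "distributed M lborel X (exponential_density lx)"
    and distY: "distributed M lborel Y (exponential_density ly)"
    and distZ: "distributed M lborel Z (exponential_density lz)"
    and A: "0 < A" and C: "0 \<le> C" and DR: "0 \<le> DR" and PTt: "0 \<le> PTt" and N: "0 < N"
    and PSbar: "0 < PSbar" and ITC: "0 < Iitc * dSD powr tau" and psi: "0 < psi" and al: "A * psi < al"
  shows "prob {w \<in> space M. sidnr_R al A C DR PTt N PSbar Iitc dSD tau (X w) (Y w) (Z w) \<le> psi}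
    = 1 - prob {w \<in> space M. sidnr_threshold al A C DR PTt N PSbar Iitc dSD tau psi (Y w) (Z w) < X w}"
proof -
  have [measurable]: "X \<in> borel_measurable M" "Y \<in> borel_measurable M" "Z \<in> borel_measurable M"
    using distX distY distZ by (auto dest: distributed_measurable)
  let ?sid = "\<lambda>w. sidnr_R al A C DR PTt N PSbar Iitc dSD tau (X w) (Y w) (Z w)"
  let ?thr = "\<lambda>w. sidnr_threshold al A C DR PTt N PSbar Iitc dSD tau psi (Y w) (Z w)"
  have event: "{w \<in> space M. psi < ?sid w} \<in> events"
    unfolding sidnr_R_def source_power_def Let_def by measurable
  have "AE w in M. psi < ?sid w \<longleftrightarrow> ?thr w < X w"
    using AE_exponential_distributed_pos[OF distX] AE_exponential_distributed_pos[OF distY]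
      AE_exponential_distributed_pos[OF distZ]
    by eventually_elim (simp add: less_sidnr_R_iff[OF A C DR PTt N PSbar ITC psi al])
  then have "prob {w \<in> space M. psi < ?sid w} = prob {w \<in> space M. ?thr w < X w}"
    by (rule prob_eq_AE[OF _ event]) (simp add: sidnr_threshold_def)
  then show ?thesis
    using prob_neg[OF event] by (simp add: not_less)
qed

theorem proposition1:
  fixes M :: "'w measure"
    and X Y Z :: "'w \<Rightarrow> real"
    and alpha eps :: "nat \<Rightarrow> real"
    and B j :: nat
    and phiSR phiTR zetaSR dSR dTR dSD tau sigR2 PT PSbar Iitc lx ly lz psi
        A C DR PTt KD MD KU MU L LamS muS xiS :: real
  assumes prob: "prob_space M"
    and distX: "distributed M lborel X (exponential_density lx)"
    and distY: "distributed M lborel Y (exponential_density ly)"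
    and distZ: "distributed M lborel Z (exponential_density lz)"
    and indep: "prob_space.indep_vars M (\<lambda>_. borel) (\<lambda>i::nat. if i = 0 then X else if i = 1 then Y else Z) {0, 1, 2}"
    and lpos: "lx > 0" "ly > 0" "lz > 0"
    and j: "1 \<le> j" "j < B"
    and alpha_pos: "\<forall>n\<in>{1..B}. alpha n > 0"
    and alpha_dec: "\<forall>n\<in>{1..<B}. alpha n > alpha (Suc n)"
    and alpha_sum: "(\<Sum>n=1..B. alpha n) = 1"
    and eps: "\<forall>n. 0 < eps n \<and> eps n < 1"
    and hw: "phiSR \<ge> 0" "phiTR \<ge> 0"
    and csi: "zetaSR \<ge> 0"
    and dist: "dSR > 0" "dTR > 0" "dSD > 0"
    and tau: "tau > 0"
    and noise: "sigR2 > 0"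
    and powers: "PT > 0" "PSbar > 0" "Iitc > 0"
    and psi_pos: "psi > 0"
    and psi_lt: "psi < alpha j / A"
    and A_def: "A =  (\<Sum>n=j+1..B. alpha n) + (\<Sum>n=1..<j. eps n * alpha n) + phiSR^2"
    and C_def: "C = zetaSR * (1 + phiSR^2)"
    and DR_def: "DR = dSR powr tau * dTR powr (- tau) * (1 + phiTR^2)"
    and PTt_def: "PTt = PT / dTR powr tau"
    and KD_def: "KD = DR * PTt * psi / (PSbar * (alpha j - A * psi))"
    and MD_def: "MD = psi * dSR powr tau * sigR2 / (PSbar * (alpha j - A * psi))"
    and KU_def: "KU = DR * PTt * psi / (Iitc * dSD powr tau * (alpha j - A * psi))"
    and MU_def: "MU = psi * dSR powr tau * sigR2 / (Iitc * dSD powr tau * (alpha j - A * psi))"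
    and L_def: "L = C * psi / (alpha j - A * psi)"
    and LamS_def: "LamS = Iitc * dSD powr tau / PSbar"
    and muS_def: "muS = lz + lx * LamS * KU"
    and xiS_def: "xiS = MU / KU + ly / (lx * KU)"
  shows "measure M {w \<in> space M.
            sidnr_R (alpha j) A C DR PTt (dSR powr tau * sigR2) PSbar Iitc dSD tau (X w) (Y w) (Z w) \<le> psi}
         = 1 - lz * exp (- lx * (MD + L)) / (lz + lx * KD) * (1 - exp (- ly * LamS))
             + ly * lz * Ei (- muS * xiS) / (lx * KU)
               * exp (- LamS * (ly + lx * MU) - lx * L + muS * xiS)"
proof -
  interpret prob_space M
    by (rule prob)
  have "0 < A"
    unfolding A_def using alpha_pos eps j
    by (intro add_pos_nonneg sum_pos sum_nonneg mult_nonneg_nonneg) (auto intro: less_imp_le)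
  then have gap: "A * psi < alpha j"
    using psi_lt by (simp add: pos_less_divide_eq mult.commute)
  have pos: "0 < DR" "0 < PTt" "0 \<le> C" "0 < dSR powr tau * sigR2" "0 < Iitc * dSD powr tau"
    using hw csi dist noise powers by (simp_all add: DR_def PTt_def C_def add_pos_nonneg)
  have coeffs: "0 \<le> L" "0 \<le> KD" "0 \<le> MD" "0 < KU" "0 \<le> MU" and "0 \<le> LamS"
    using pos gap psi_pos powers noise
    unfolding L_def KD_def MD_def KU_def MU_def LamS_def by simp_all
  have "measure M {w \<in> space M.
            sidnr_R (alpha j) A C DR PTt (dSR powr tau * sigR2) PSbar Iitc dSD tau (X w) (Y w) (Z w) \<le> psi}
      = 1 - prob {w \<in> space M. L + (if Y w \<le> LamS then KD * Z w + MD else Y w * (KU * Z w + MU)) < X w}"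
    using prob_sidnr_R_le[OF distX distY distZ \<open>0 < A\<close> pos(3) less_imp_le[OF pos(1)]
        less_imp_le[OF pos(2)] pos(4) powers(2) pos(5) psi_pos gap]
    by (simp add: sidnr_threshold_def L_def KD_def MD_def KU_def MU_def LamS_def mult.assoc)
  also have "prob {w \<in> space M. L + (if Y w \<le> LamS then KD * Z w + MD else Y w * (KU * Z w + MU)) < X w}
      = lz * exp (- lx * (MD + L)) / (lz + lx * KD) * (1 - exp (- ly * LamS))
        - ly * lz * Ei (- muS * xiS) / (lx * KU) * exp (- LamS * (ly + lx * MU) - lx * L + muS * xiS)"
    unfolding muS_def xiS_def
    by (rule prob_exponential_exceeds_threshold[OF distX distY distZ indep_vars_triple[OF indep] lpos
          \<open>0 \<le> LamS\<close> coeffs])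
  finally show ?thesis
    by simp
qed

end
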